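(* Let $\eta>0$ and $\theta>0$, and let $(\bar q(t))_{t\in\mathbb Z_+}$ be a sequence in $(0,1)$ such that $$\bar q(t+1)-\bar q(t)\le-\frac{\eta\,\bar q(t)^2}{\log\big(e-\log(\theta\bar q(t))\big)}\quad\text{for all }t,$$ and $\theta\bar q(0)\le1$. Then for every $T$ with $\eta T/\theta\ge1$, $$\bar q(T)\le\frac{1}{\eta T}\log\Big(e+\log\Big(\frac{\eta T}{\theta}\Big)\Big).$$ *)

theory Defs
  imports Complex_Main
begin

end

theory Submission
  imports Defs
begin

text \<open>
  The weight \<open>w y = ln (e - ln y)\<close> is at least 1 and antitone on \<open>(0, 1]\<close>.
  By induction \<open>\<theta> q\<close> stays in \<open>(0, 1]\<close>, so \<open>q\<close> is nonincreasing and the weights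
  \<open>w (\<theta> q t)\<close> are nondecreasing. Since \<open>q (t + 1) \<le> q t\<close>, the recursion gives
  \<open>1 / q (t + 1) \<ge> 1 / q t + \<eta> / w (\<theta> q t)\<close>, and summing with the monotone
  weights yields \<open>q T \<le> w (\<theta> q T) / (\<eta> T)\<close>. This implicit bound becomes explicit
  by comparing \<open>q T\<close> with \<open>a = 1 / (\<eta> T)\<close>: either \<open>q T \<le> a \<le> a w (\<theta> a)\<close>, or
  \<open>q T > a\<close> and then \<open>w (\<theta> q T) \<le> w (\<theta> a) = ln (e + ln (\<eta> T / \<theta>))\<close>.
\<close>

definition loglog_weight :: "real \<Rightarrow> real" where
  "loglog_weight y = ln (exp 1 - ln y)"

lemma loglog_weight_ge_one:
  assumes "0 < y" "y \<le> 1"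
  shows "1 \<le> loglog_weight y"
proof -
  have "exp 1 \<le> exp 1 - ln y"
    using assms by simp
  then have "ln (exp 1) \<le> ln (exp 1 - ln y)"
    by (intro ln_mono) auto
  then show ?thesis
    unfolding loglog_weight_def by simp
qed

lemma loglog_weight_antimono:
  assumes "0 < y" "y \<le> z" "z \<le> 1"
  shows "loglog_weight z \<le> loglog_weight y"
proof -
  have "ln y \<le> ln z" "ln z \<le> 0"
    using assms by auto
  moreover have "0 < exp (1::real)"
    by simp
  ultimately show ?thesis
    unfolding loglog_weight_def by (intro ln_mono) linarith+
qed

lemma inverse_ge_add_of_quadratic_decrease:
  fixes a b c :: real
  assumes "0 < a" "0 < b" "0 \<le> c" "b - a \<le> - (c * a\<^sup>2)"
  shows "1 / a + c \<le> 1 / b"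
proof -
  have "0 \<le> c * a\<^sup>2"
    using assms(3) by simp
  then have "b \<le> a"
    using assms(4) by linarith
  then have "c * (a * b) \<le> c * a\<^sup>2"
    using assms by (intro mult_left_mono) (auto simp: power2_eq_square)
  then have "c * (a * b) \<le> a - b"
    using assms(4) by linarith
  then show ?thesis
    using assms(1,2) by (simp add: field_simps)
qed

lemma inverse_ge_of_quadratic_decrease:
  fixes \<eta> :: real and q w :: "nat \<Rightarrow> real"
  assumes "0 \<le> \<eta>" "\<And>t. 0 < q t" "\<And>t. 0 < w t" "incseq w"
    and "\<And>t. q (Suc t) - q t \<le> - (\<eta> * (q t)\<^sup>2 / w t)"
  shows "\<eta> * real n / w n \<le> 1 / q n"
proof (induction n)
  case 0
  show ?case
    using assms(2)[of 0] by simp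
next
  case (Suc n)
  have step: "1 / q n + \<eta> / w n \<le> 1 / q (Suc n)"
    using assms(5)[of n] assms(1-3)
    by (intro inverse_ge_add_of_quadratic_decrease) (auto simp: less_imp_le)
  have "w n \<le> w (Suc n)"
    using assms(4) by (rule incseq_SucD)
  then have "\<eta> * real n / w (Suc n) \<le> \<eta> * real n / w n"
    and "\<eta> / w (Suc n) \<le> \<eta> / w n"
    using assms(1,3) by (auto intro!: divide_left_mono)
  moreover have "\<eta> * real (Suc n) / w (Suc n) = \<eta> * real n / w (Suc n) + \<eta> / w (Suc n)"
    by (simp add: add_divide_distrib algebra_simps)
  ultimately show ?case
    using Suc.IH step by linarith
qed

lemma le_mult_self_of_le_mult:
  fixes a x :: real and f :: "real \<Rightarrow> real"
  assumes "0 < a" "1 \<le> f a" "x \<le> a * f x" "\<And>y. a \<le> y \<Longrightarrow> y \<le> x \<Longrightarrow> f y \<le> f a"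
  shows "x \<le> a * f a"
proof (cases "x \<le> a")
  case True
  moreover have "a \<le> a * f a"
    using assms(1,2) by simp
  ultimately show ?thesis
    by linarith
next
  case False
  then have "a * f x \<le> a * f a"
    using assms(1,4) by simp
  then show ?thesis
    using assms(3) by linarith
qed

lemma loglog_decrease_stays_bounded:
  fixes \<eta> \<theta> :: real and q :: "nat \<Rightarrow> real"
  assumes "0 \<le> \<eta>" "0 < \<theta>" "\<And>t. 0 < q t"
    and "\<And>t. q (Suc t) - q t \<le> - (\<eta> * (q t)\<^sup>2 / loglog_weight (\<theta> * q t))"
    and "\<theta> * q 0 \<le> 1"
  shows "\<theta> * q t \<le> 1" and "q (Suc t) \<le> q t"
proof -
  have decrease: "q (Suc t) \<le> q t" if "\<theta> * q t \<le> 1" for t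
  proof -
    have "0 \<le> \<eta> * (q t)\<^sup>2 / loglog_weight (\<theta> * q t)"
      using loglog_weight_ge_one[OF _ that] assms(1-3) by simp
    then show ?thesis
      using assms(4)[of t] by linarith
  qed
  show small: "\<theta> * q t \<le> 1" for t
  proof (induction t)
    case 0
    show ?case using assms(5) .
  next
    case (Suc t)
    have "\<theta> * q (Suc t) \<le> \<theta> * q t"
      using decrease[OF Suc] assms(2) by simp
    then show ?case
      using Suc by linarith
  qed
  then show "q (Suc t) \<le> q t"
    using decrease small by blast
qed

lemma inverse_ge_of_loglog_decrease:
  fixes \<eta> \<theta> :: real and q :: "nat \<Rightarrow> real"
  assumes "0 \<le> \<eta>" "0 < \<theta>" "\<And>t. 0 < q t"
    and "\<And>t. q (Suc t) - q t \<le> - (\<eta> * (q t)\<^sup>2 / loglog_weight (\<theta> * q t))"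
    and "\<theta> * q 0 \<le> 1"
  shows "\<eta> * real n / loglog_weight (\<theta> * q n) \<le> 1 / q n"
proof (rule inverse_ge_of_quadratic_decrease
    [where w = "\<lambda>t. loglog_weight (\<theta> * q t)", OF assms(1,3) _ _ assms(4)])
  note bounded = loglog_decrease_stays_bounded[OF assms]
  have pos: "0 < \<theta> * q t" for t
    using assms(2,3) by simp
  show "0 < loglog_weight (\<theta> * q t)" for t
    using loglog_weight_ge_one[OF pos bounded(1), of t] by linarith
  show "incseq (\<lambda>t. loglog_weight (\<theta> * q t))"
  proof (rule incseq_SucI, rule loglog_weight_antimono)
    show "\<theta> * q (Suc t) \<le> \<theta> * q t" for t
      using bounded(2) assms(2) by simp
  qed (use pos bounded(1) in auto)
qed

lemma le_mult_loglog_weight_of_le_mult: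
  fixes \<theta> a x :: real
  assumes "0 < \<theta>" "0 < a" "\<theta> * a \<le> 1" "\<theta> * x \<le> 1" "x \<le> a * loglog_weight (\<theta> * x)"
  shows "x \<le> a * loglog_weight (\<theta> * a)"
proof (rule le_mult_self_of_le_mult
    [where f = "\<lambda>y. loglog_weight (\<theta> * y)", OF assms(2) _ assms(5)])
  show "1 \<le> loglog_weight (\<theta> * a)"
    using assms(1-3) by (intro loglog_weight_ge_one) auto
  show "loglog_weight (\<theta> * y) \<le> loglog_weight (\<theta> * a)" if "a \<le> y" "y \<le> x" for y
  proof (rule loglog_weight_antimono)
    have "\<theta> * y \<le> \<theta> * x"
      using that(2) assms(1) by simp
    then show "\<theta> * y \<le> 1"
      using assms(4) by linarith
  qed (use that assms(1,2) in auto)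
qed

theorem lemma22:
  fixes \<eta> \<theta> :: real and q :: "nat \<Rightarrow> real" and T :: nat
  assumes "\<eta> > 0" and "\<theta> > 0"
    and "\<And>t. 0 < q t \<and> q t < 1"
    and "\<And>t. q (Suc t) - q t \<le> - (\<eta> * (q t)^2 / ln (exp 1 - ln (\<theta> * q t)))"
    and "\<theta> * q 0 \<le> 1"
    and "\<eta> * real T / \<theta> \<ge> 1"
  shows "q T \<le> (1 / (\<eta> * real T)) * ln (exp 1 + ln (\<eta> * real T / \<theta>))"
proof -
  define a where "a = 1 / (\<eta> * real T)"
  have "0 < real T"
    using assms(6) by (cases T) auto
  then have a: "0 < a" "\<theta> * a \<le> 1"
    using assms(1,2,6) by (auto simp: a_def field_simps)
  have q: "0 < q t" for t
    using assms(3) by simp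
  note recursion = assms(4)[folded loglog_weight_def]
  note hyps = less_imp_le[OF assms(1)] assms(2) q recursion assms(5)
  have "1 \<le> loglog_weight (\<theta> * q T)"
    using assms(2) q loglog_decrease_stays_bounded(1)[OF hyps]
    by (intro loglog_weight_ge_one) auto
  then have "q T \<le> a * loglog_weight (\<theta> * q T)"
    using inverse_ge_of_loglog_decrease[OF hyps, of T] q[of T] \<open>0 < real T\<close> assms(1)
    by (simp add: a_def field_simps)
  then have "q T \<le> a * loglog_weight (\<theta> * a)"
    using a assms(2) loglog_decrease_stays_bounded(1)[OF hyps]
    by (intro le_mult_loglog_weight_of_le_mult)
  moreover have "loglog_weight (\<theta> * a) = ln (exp 1 + ln (\<eta> * real T / \<theta>))"
    using a assms(2) by (simp add: a_def loglog_weight_def ln_div algebra_simps)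
  ultimately show ?thesis
    by (simp add: a_def)
qed

end
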